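(* If $H$ is a Vorob'ev regular hypergraph, then Graham's algorithm succeeds on $H$.
   Context: A hypergraph $H=(V,E)$ has a finite vertex set $V$ and a set $E$ of nonempty subsets of $V$ (hyperedges). Graham's algorithm: treating the hyperedges as a finite list, repeatedly apply the following operations until neither applies: (1) if a vertex $v$ belongs to exactly one hyperedge $X_i$, delete $v$ from $X_i$ (discarding $X_i$ if it becomes empty); (2) if two hyperedges with distinct indices satisfy $X_i\subseteq X_j$, delete $X_i$. Graham's algorithm succeeds on $H$ if the result has no hyperedges. Vorob'ev regularity: a complex is a hypergraph whose set of hyperedges is closed under taking subsets; the downward closure of $H$ is the complex whose hyperedges are all subsets of hyperedges of $H$. In a complex $\mathcal K$, a hyperedge is maximal if not a proper subset of another hyperedge. For distinct maximal hyperedges $X,Y$, $X$ yields a maximal intersection with $Y$ if there is no maximal hyperedge $Z\notin\{X,Y\}$ with $X\cap Y\subsetneq X\cap Z$. A maximal hyperedge $X$ is extreme if all maximal intersections of $X$ (i.e., the sets $X\cap Y$ over those $Y$ with which $X$ yields a maximal intersection) are equal. The proper vertices of an extreme $X$ are those belonging to no other maximal hyperedge; the normal subcomplex corresponding to $X$ consists of all hyperedges of $\mathcal K$ disjoint from the proper vertices of $X$. A normal series is a sequence $\mathcal K=\mathcal K_0\supset\mathcal K_1\supset\cdots\supset\mathcal K_r$ with each $\mathcal K_{\ell+1}$ a normal subcomplex of $\mathcal K_\ell$ ($0\le\ell<r$) and $\mathcal K_r$ having no extreme hyperedge. $\mathcal K$ is regular if it has a normal series whose last term is the complex without vertices. $H$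 is Vorob'ev regular if its downward closure is regular. *)

theory Defs
  imports Main
begin

definition hypergraph :: "'a set \<Rightarrow> 'a set set \<Rightarrow> bool" where
  "hypergraph V E \<longleftrightarrow> finite V \<and> (\<forall>X\<in>E. X \<noteq> {} \<and> X \<subseteq> V)"

definition del_at :: "nat \<Rightarrow> 'b list \<Rightarrow> 'b list" where
  "del_at i xs = take i xs @ drop (Suc i) xs"

inductive graham_step :: "'a set list \<Rightarrow> 'a set list \<Rightarrow> bool" where
  del_vertex:
    "\<lbrakk> i < length xs; v \<in> xs ! i; \<forall>j<length xs. v \<in> xs ! j \<longrightarrow> j = i;
       xs ! i - {v} \<noteq> {} \<rbrakk>
     \<Longrightarrow> graham_step xs (xs[i := xs ! i - {v}])"
| del_vertex_discard:
    "\<lbrakk> i < length xs; v \<in> xs ! i; \<forall>j<length xs. v \<in> xs ! j \<longrightarrow> j = i;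
       xs ! i - {v} = {} \<rbrakk>
     \<Longrightarrow> graham_step xs (del_at i xs)"
| del_edge:
    "\<lbrakk> i < length xs; j < length xs; i \<noteq> j; xs ! i \<subseteq> xs ! j \<rbrakk>
     \<Longrightarrow> graham_step xs (del_at i xs)"

definition graham_succeeds :: "'a set list \<Rightarrow> bool" where
  "graham_succeeds xs \<longleftrightarrow>
     (\<forall>ys. graham_step\<^sup>*\<^sup>* xs ys \<longrightarrow> (\<nexists>zs. graham_step ys zs) \<longrightarrow> ys = [])"

text \<open>A complex is represented by its set of hyperedges; its vertices are the
  vertices occurring in hyperedges.\<close>
definition down_closure :: "'a set set \<Rightarrow> 'a set set" where
  "down_closure E = {A. A \<noteq> {} \<and> (\<exists>X\<in>E. A \<subseteq> X)}"

definition maximal_edge :: "'a set set \<Rightarrow> 'a set \<Rightarrow> bool" where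
  "maximal_edge K X \<longleftrightarrow> X \<in> K \<and> \<not> (\<exists>Y\<in>K. X \<subset> Y)"

definition yields_max_int :: "'a set set \<Rightarrow> 'a set \<Rightarrow> 'a set \<Rightarrow> bool" where
  "yields_max_int K X Y \<longleftrightarrow> maximal_edge K X \<and> maximal_edge K Y \<and> X \<noteq> Y \<and>
     \<not> (\<exists>Z. maximal_edge K Z \<and> Z \<noteq> X \<and> Z \<noteq> Y \<and> X \<inter> Y \<subset> X \<inter> Z)"

definition extreme :: "'a set set \<Rightarrow> 'a set \<Rightarrow> bool" where
  "extreme K X \<longleftrightarrow> maximal_edge K X \<and>
     (\<forall>Y Y'. yields_max_int K X Y \<longrightarrow> yields_max_int K X Y' \<longrightarrow> X \<inter> Y = X \<inter> Y')"

definition proper_vertices :: "'a set set \<Rightarrow> 'a set \<Rightarrow> 'a set" where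
  "proper_vertices K X = {v \<in> X. \<forall>Y. maximal_edge K Y \<and> Y \<noteq> X \<longrightarrow> v \<notin> Y}"

definition normal_subcomplex :: "'a set set \<Rightarrow> 'a set \<Rightarrow> 'a set set" where
  "normal_subcomplex K X = {A \<in> K. A \<inter> proper_vertices K X = {}}"

definition normal_series :: "'a set set \<Rightarrow> 'a set set list \<Rightarrow> bool" where
  "normal_series K Ks \<longleftrightarrow> Ks \<noteq> [] \<and> hd Ks = K \<and>
     (\<forall>l. Suc l < length Ks \<longrightarrow> Ks ! Suc l \<subset> Ks ! l \<and>
        (\<exists>X. extreme (Ks ! l) X \<and> Ks ! Suc l = normal_subcomplex (Ks ! l) X)) \<and>
     \<not> (\<exists>X. extreme (last Ks) X)"

definition regular_complex :: "'a set set \<Rightarrow> bool" where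
  "regular_complex K \<longleftrightarrow> (\<exists>Ks. normal_series K Ks \<and> last Ks = {})"

definition vorobev_regular :: "'a set set \<Rightarrow> bool" where
  "vorobev_regular E \<longleftrightarrow> regular_complex (down_closure E)"

end

theory Submission
  imports Defs
begin

text \<open>Graham's algorithm keeps the current family F of hyperedges a reduct of E: every
  member of F lies in a hyperedge of E, and every nonempty trace of a hyperedge of E on the
  vertices of F lies in a single member of F. When the algorithm stops, no member of F
  contains another and every vertex lies in two members. Then no member of F meets a proper
  vertex w of a maximal hyperedge X of a subcomplex of the downward closure containing F:
  two members through w would both lie in X, hence in one hyperedge of E, hence in one
  member of F. So F survives every step of a normal series and lies in its empty last term.\<close>

definition reduct :: "'a set set \<Rightarrow> 'a set set \<Rightarrow> bool" where
  "reduct E F \<longleftrightarrow> (\<forall>f\<in>F. \<exists>Z\<in>E. f \<subseteq> Z) \<and>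
     (\<forall>Z\<in>E. Z \<inter> \<Union>F \<noteq> {} \<longrightarrow> (\<exists>g\<in>F. Z \<inter> \<Union>F \<subseteq> g))"

lemma reduct_refl: "reduct E E"
  unfolding reduct_def by blast

lemma reduct_trans:
  assumes "reduct E F" and "reduct F G"
  shows "reduct E G"
proof -
  from assms have EF1: "\<forall>f\<in>F. \<exists>Z\<in>E. f \<subseteq> Z"
    and EF2: "\<forall>Z\<in>E. Z \<inter> \<Union>F \<noteq> {} \<longrightarrow> (\<exists>f\<in>F. Z \<inter> \<Union>F \<subseteq> f)"
    and FG1: "\<forall>g\<in>G. \<exists>f\<in>F. g \<subseteq> f"
    and FG2: "\<forall>f\<in>F. f \<inter> \<Union>G \<noteq> {} \<longrightarrow> (\<exists>g\<in>G. f \<inter> \<Union>G \<subseteq> g)"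
    by (simp_all add: reduct_def)
  have GF: "\<Union>G \<subseteq> \<Union>F" using FG1 by blast
  show ?thesis
    unfolding reduct_def
  proof (intro conjI ballI impI)
    fix g assume "g \<in> G"
    then show "\<exists>Z\<in>E. g \<subseteq> Z" using EF1 FG1 by (meson subset_trans)
  next
    fix Z assume Z: "Z \<in> E" "Z \<inter> \<Union>G \<noteq> {}"
    then have "Z \<inter> \<Union>F \<noteq> {}" using GF by blast
    then obtain f where f: "f \<in> F" "Z \<inter> \<Union>F \<subseteq> f" using EF2 Z(1) by blast
    then have "f \<inter> \<Union>G \<noteq> {}" using Z GF by blast
    then obtain g where "g \<in> G" "f \<inter> \<Union>G \<subseteq> g" using FG2 f(1) by blast
    moreover have "Z \<inter> \<Union>G \<subseteq> f \<inter> \<Union>G" using f(2) GF by (auto simp: subset_iff)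
    ultimately show "\<exists>g\<in>G. Z \<inter> \<Union>G \<subseteq> g" by auto
  qed
qed

lemma reduct_image_Diff: "reduct F ((\<lambda>f. f - S) ` F)"
  unfolding reduct_def by blast

lemma reduct_insert_subset: "f \<subseteq> g \<Longrightarrow> g \<in> G \<Longrightarrow> reduct (insert f G) G"
  unfolding reduct_def by blast

lemma reduct_insert_empty: "reduct (insert {} G) G"
  unfolding reduct_def by blast

lemma set_list_update_del_at:
  "i < length xs \<Longrightarrow> set (xs[i := a]) = insert a (set (del_at i xs))"
  by (auto simp: upd_conv_take_nth_drop del_at_def)

lemma set_del_at_subset: "set (del_at i xs) \<subseteq> set xs"
  by (auto simp: del_at_def dest: in_set_takeD in_set_dropD)

lemma nth_mem_del_at:
  assumes "j < length xs" "j \<noteq> i"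
  shows "xs ! j \<in> set (del_at i xs)"
proof (cases "j < i")
  case True
  then have "take i xs ! j = xs ! j" "j < length (take i xs)" using assms by auto
  then show ?thesis unfolding del_at_def by (metis in_set_conv_nth Un_iff set_append)
next
  case False
  then have "drop (Suc i) xs ! (j - Suc i) = xs ! j" "j - Suc i < length (drop (Suc i) xs)"
    using assms by auto
  then show ?thesis unfolding del_at_def by (metis in_set_conv_nth Un_iff set_append)
qed

lemma list_update_Diff_eq_map:
  assumes "i < length xs" "\<forall>j<length xs. v \<in> xs ! j \<longrightarrow> j = i"
  shows "xs[i := xs ! i - {v}] = map (\<lambda>f. f - {v}) xs"
proof (rule nth_equalityI)
  fix j assume "j < length (xs[i := xs ! i - {v}])"
  then have "j < length xs" by simp
  then show "xs[i := xs ! i - {v}] ! j = map (\<lambda>f. f - {v}) xs ! j"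
    using assms by (cases "j = i") auto
qed simp

lemma graham_step_reduct: "graham_step xs ys \<Longrightarrow> reduct (set xs) (set ys)"
proof (induction rule: graham_step.induct)
  case (del_vertex i xs v)
  then have "set (xs[i := xs ! i - {v}]) = (\<lambda>f. f - {v}) ` set xs"
    by (metis list_update_Diff_eq_map set_map)
  then show ?case by (simp add: reduct_image_Diff)
next
  case (del_vertex_discard i xs v)
  then have "set (xs[i := {}]) = (\<lambda>f. f - {v}) ` set xs"
    by (metis list_update_Diff_eq_map set_map)
  then have "reduct (set xs) (insert {} (set (del_at i xs)))"
    using reduct_image_Diff set_list_update_del_at[OF del_vertex_discard(1)] by metis
  then show ?case using reduct_insert_empty reduct_trans by blast
next
  case (del_edge i xs j)
  have "set xs = insert (xs ! i) (set (del_at i xs))"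
    using set_list_update_del_at[OF del_edge(1), of "xs ! i"] by simp
  then show ?case
    using reduct_insert_subset[OF del_edge(4) nth_mem_del_at[OF del_edge(2) del_edge(3)[symmetric]]]
    by simp
qed

lemma graham_step_nonempty: "graham_step xs ys \<Longrightarrow> {} \<notin> set xs \<Longrightarrow> {} \<notin> set ys"
proof (induction rule: graham_step.induct)
  case (del_vertex i xs v)
  have "set (xs[i := xs ! i - {v}]) \<subseteq> insert (xs ! i - {v}) (set xs)"
    by (rule set_update_subset_insert)
  then show ?case using del_vertex by blast
next
  case (del_vertex_discard i xs v)
  then show ?case by (metis set_del_at_subset subsetD)
next
  case (del_edge i xs j)
  then show ?case by (metis set_del_at_subset subsetD)
qed

lemma rtranclp_graham_step_reduct:
  "graham_step\<^sup>*\<^sup>* xs ys \<Longrightarrow> reduct (set xs) (set ys)"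
  by (induction rule: rtranclp_induct) (use reduct_refl reduct_trans graham_step_reduct in metis)+

lemma rtranclp_graham_step_nonempty:
  "graham_step\<^sup>*\<^sup>* xs ys \<Longrightarrow> {} \<notin> set xs \<Longrightarrow> {} \<notin> set ys"
  by (induction rule: rtranclp_induct) (use graham_step_nonempty in blast)+

lemma graham_stuck_not_subset:
  assumes "\<nexists>zs. graham_step ys zs" "i < length ys" "j < length ys" "i \<noteq> j"
  shows "\<not> ys ! i \<subseteq> ys ! j"
  using assms graham_step.del_edge by blast

lemma graham_stuck_vertex_shared:
  assumes "\<nexists>zs. graham_step ys zs" "i < length ys" "v \<in> ys ! i"
  shows "\<exists>j<length ys. j \<noteq> i \<and> v \<in> ys ! j"
  using assms graham_step.del_vertex graham_step.del_vertex_discard by metis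

lemma graham_stuck_reduct_no_common_superedge:
  assumes stuck: "\<nexists>zs. graham_step ys zs" and "reduct E (set ys)" "Z \<in> E"
    and ij: "i < length ys" "j < length ys" "i \<noteq> j"
    and "ys ! i \<subseteq> Z" "ys ! j \<subseteq> Z" "ys ! i \<noteq> {}"
  shows False
proof -
  have sub: "ys ! i \<union> ys ! j \<subseteq> Z \<inter> \<Union>(set ys)"
    using assms nth_mem by blast
  then have "Z \<inter> \<Union>(set ys) \<noteq> {}" using \<open>ys ! i \<noteq> {}\<close> by blast
  then obtain k where k: "k < length ys" "Z \<inter> \<Union>(set ys) \<subseteq> ys ! k"
    using \<open>reduct E (set ys)\<close> \<open>Z \<in> E\<close> unfolding reduct_def by (metis in_set_conv_nth)
  show False
  proof (cases "k = i")
    case True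
    then show False using graham_stuck_not_subset[OF stuck ij(2,1) ij(3)[symmetric]] sub k by blast
  next
    case False
    then show False using graham_stuck_not_subset[OF stuck ij(1) k(1)] sub k by blast
  qed
qed

lemma finite_has_maximal_edge:
  assumes "finite K" "f \<in> K"
  obtains M where "maximal_edge K M" "f \<subseteq> M"
proof -
  obtain M where "M \<in> K" "f \<subseteq> M" "\<forall>M'\<in>K. M \<subseteq> M' \<longrightarrow> M = M'"
    using finite_has_maximal2[OF assms] by blast
  then have "maximal_edge K M" unfolding maximal_edge_def by (auto simp: psubset_eq)
  then show thesis using \<open>f \<subseteq> M\<close> by (rule that)
qed

lemma graham_stuck_reduct_subset_normal_subcomplex:
  assumes stuck: "\<nexists>zs. graham_step ys zs" and reduct: "reduct E (set ys)"
    and K: "finite K" "set ys \<subseteq> K" "K \<subseteq> down_closure E" and X: "maximal_edge K X"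
  shows "set ys \<subseteq> normal_subcomplex K X"
proof
  fix f assume "f \<in> set ys"
  then obtain i where i: "i < length ys" "f = ys ! i" by (metis in_set_conv_nth)
  have "f \<inter> proper_vertices K X = {}"
  proof (rule ccontr)
    assume "f \<inter> proper_vertices K X \<noteq> {}"
    then obtain w where w: "w \<in> ys ! i" "w \<in> proper_vertices K X" using i by blast
    then have only_X: "Y = X" if "maximal_edge K Y" "w \<in> Y" for Y
      using that unfolding proper_vertices_def by blast
    obtain j where j: "j < length ys" "j \<noteq> i" "w \<in> ys ! j"
      using graham_stuck_vertex_shared[OF stuck i(1) w(1)] by blast
    obtain M where "maximal_edge K M" "ys ! i \<subseteq> M"
      using finite_has_maximal_edge[OF K(1)] K(2) i(1) nth_mem by blast
    then have "ys ! i \<subseteq> X" using only_X w(1) by blast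
    obtain M' where "maximal_edge K M'" "ys ! j \<subseteq> M'"
      using finite_has_maximal_edge[OF K(1)] K(2) j(1) nth_mem by blast
    then have "ys ! j \<subseteq> X" using only_X j(3) by blast
    have "X \<in> down_closure E" using X K(3) unfolding maximal_edge_def by blast
    then obtain Z where "Z \<in> E" "X \<subseteq> Z" unfolding down_closure_def by blast
    show False
      by (rule graham_stuck_reduct_no_common_superedge[OF stuck reduct \<open>Z \<in> E\<close> i(1) j(1)
            j(2)[symmetric]])
        (use \<open>X \<subseteq> Z\<close> \<open>ys ! i \<subseteq> X\<close> \<open>ys ! j \<subseteq> X\<close> w(1) in blast)+
  qed
  then show "f \<in> normal_subcomplex K X"
    using \<open>f \<in> set ys\<close> K(2) unfolding normal_subcomplex_def by blast
qed

lemma normal_series_subset_last: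
  assumes Ks: "normal_series K Ks" and "S \<subseteq> K"
    and step: "\<And>L X. L \<subseteq> K \<Longrightarrow> S \<subseteq> L \<Longrightarrow> extreme L X \<Longrightarrow> S \<subseteq> normal_subcomplex L X"
  shows "S \<subseteq> last Ks"
proof -
  have "S \<subseteq> Ks ! l \<and> Ks ! l \<subseteq> K" if "l < length Ks" for l
    using that
  proof (induction l)
    case 0
    have "Ks ! 0 = K" using Ks unfolding normal_series_def by (metis hd_conv_nth)
    then show ?case using \<open>S \<subseteq> K\<close> by simp
  next
    case (Suc l)
    then obtain X where "extreme (Ks ! l) X" "Ks ! Suc l = normal_subcomplex (Ks ! l) X"
      using Ks unfolding normal_series_def by blast
    moreover have "normal_subcomplex (Ks ! l) X \<subseteq> Ks ! l"
      unfolding normal_subcomplex_def by blast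
    ultimately show ?case using Suc step by auto
  qed
  then show ?thesis using Ks unfolding normal_series_def by (simp add: last_conv_nth)
qed

lemma finite_down_closure: "hypergraph V E \<Longrightarrow> finite (down_closure E)"
  unfolding hypergraph_def down_closure_def
  by (rule finite_subset[of _ "Pow V"]) auto

theorem lemma17:
  fixes V :: "'a set" and E :: "'a set set" and xs :: "'a set list"
  assumes "hypergraph V E"
    and "vorobev_regular E"
    and "distinct xs" and "set xs = E"
  shows "graham_succeeds xs"
  unfolding graham_succeeds_def
proof (intro allI impI)
  fix ys assume steps: "graham_step\<^sup>*\<^sup>* xs ys" and stuck: "\<nexists>zs. graham_step ys zs"
  have reduct: "reduct E (set ys)"
    using rtranclp_graham_step_reduct[OF steps] assms(4) by simp
  have "{} \<notin> set ys"
    using rtranclp_graham_step_nonempty[OF steps] assms(1,4) unfolding hypergraph_def by blast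
  with reduct have "set ys \<subseteq> down_closure E"
    unfolding reduct_def down_closure_def by blast
  obtain Ks where Ks: "normal_series (down_closure E) Ks" "last Ks = {}"
    using assms(2) unfolding vorobev_regular_def regular_complex_def by blast
  have "set ys \<subseteq> last Ks"
  proof (rule normal_series_subset_last[OF Ks(1) \<open>set ys \<subseteq> down_closure E\<close>])
    fix L X assume L: "L \<subseteq> down_closure E" "set ys \<subseteq> L" and "extreme L X"
    have "finite L" using L(1) finite_down_closure[OF assms(1)] by (rule finite_subset)
    moreover have "maximal_edge L X" using \<open>extreme L X\<close> unfolding extreme_def by blast
    ultimately show "set ys \<subseteq> normal_subcomplex L X"
      using graham_stuck_reduct_subset_normal_subcomplex[OF stuck reduct _ L(2,1)] by blast
  qed
  then show "ys = []" using Ks(2) by simp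
qed

end
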